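(* For every session type $S$ and every process $P$: if there exist a trace $t$ and a process $P'$ such that $\langle P ; [\![ S ]\!] \rangle \xRightarrow{t} \langle P' ; \mathsf{no}_P \rangle$, then the typing judgement $\emptyset\cdot\emptyset \vdash P : S$ is not derivable.
   Context: Values $v,u,w$ (including tuples), value variables $x,y,z$, process variables $X,Y$; $a$ ranges over values and value variables. Boolean predicates $A$ include $\mathsf{tt},\mathsf{ff}$, equalities/comparisons of values, conjunction, negation, and for each base type $\mathsf{B}$ a predicate $\mathsf{isValue}_{\mathsf{B}}(v)$ that evaluates to $\mathsf{tt}$ if $v$ is of type $\mathsf{B}$ and to $\mathsf{ff}$ otherwise; $A\Downarrow\mathsf{tt}$ / $A\Downarrow\mathsf{ff}$ denote evaluation. Predicates are type-checked by standard rules ($\Gamma\vdash A:\mathsf{Bool}$). Processes: $P,Q ::= \triangleleft \mathtt{l}(a).P \mid \triangleright\{\mathtt{l}_i(x_i).P_i\}_{i\in I} \mid \mu_X.P \mid X \mid \mathsf{if}\ A\ \mathsf{then}\ P\ \mathsf{else}\ Q \mid \mathbf{0}$, with guarded recursion; $x_i$ is bound in $P_i$, $X$ in $\mu_X.P$. Process transitions: $\mu_X.P \xrightarrow{\tau} P[\mu_X.P/X]$; $\triangleleft\mathtt{l}(v).P \xrightarrow{\triangleleft \mathtt{l}(v)} P$; $\triangleright\{\mathtt{l}_i(x_i).P_i\}_{i\in I} \xrightarrow{\triangleright \mathtt{l}_j(v)} P_j[v/x_j]$ for $j\in I$; $\mathsf{if}\ A\ \mathsf{then}\ P\ \mathsf{else}\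 Q \xrightarrow{\tau} P$ if $A\Downarrow\mathsf{tt}$ and $\xrightarrow{\tau} Q$ if $A\Downarrow\mathsf{ff}$. Base types $\mathsf{B} ::= \mathsf{Int}\mid\mathsf{Str}\mid\mathsf{Bool}\mid\dots\mid(\mathsf{B},\mathsf{B})$. Session types: $S ::= \oplus\{!\mathtt{l}_i(\mathsf{B}_i).S_i\}_{i\in I} \mid \&\{?\mathtt{l}_i(\mathsf{B}_i).S_i\}_{i\in I} \mid \mathsf{rec}\ X.S \mid X \mid \mathsf{end}$, with $I\neq\emptyset$, labels $\mathtt{l}_i$ pairwise distinct, guarded recursion; types are equi-recursive ($\mathsf{rec}\ X.S$ is identified with $S[\mathsf{rec}\ X.S/X]$). Typing uses $\Theta$ (partial map from process variables to session types) and $\Gamma$ (partial map from value variables to base types). $\Gamma\vdash x:\mathsf{B}$ if $\Gamma(x)=\mathsf{B}$; $\Gamma\vdash v:\mathsf{B}$ if $v\in\mathsf{B}$. Process rules: (tBra) if for all $i\in I$, $\Theta\cdot\Gamma,x_i:\mathsf{B}_i\vdash P_i:S_i$, then $\Theta\cdot\Gamma\vdash \triangleright\{\mathtt{l}_i(x_i).P_i\}_{i\in I\cup J} : \&\{?\mathtt{l}_i(\mathsf{B}_i).S_i\}_{i\in I}$; (tSel) if there is $i\in I$ with $\mathtt{l}=\mathtt{l}_i$, $\Gamma\vdash a:\mathsf{B}_i$ and $\Theta\cdot\Gamma\vdash P:S_i$, then $\Theta\cdot\Gamma\vdash \triangleleft\mathtt{l}(a).P : \oplus\{!\mathtt{l}_i(\mathsf{B}_i).S_i\}_{i\in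 I}$; (tRec) $\Theta,X:S\cdot\Gamma\vdash P:S$ implies $\Theta\cdot\Gamma\vdash\mu_X.P:S$; (tPVar) $\Theta(X)=S$ implies $\Theta\cdot\Gamma\vdash X:S$; (tIf) $\Gamma\vdash A:\mathsf{Bool}$, $\Theta\cdot\Gamma\vdash P:S$, $\Theta\cdot\Gamma\vdash Q:S$ imply $\Theta\cdot\Gamma\vdash \mathsf{if}\ A\ \mathsf{then}\ P\ \mathsf{else}\ Q:S$; (tNil) $\Theta\cdot\Gamma\vdash\mathbf{0}:\mathsf{end}$. Monitors: $M,N ::= \triangleleft\mathtt{l}(a).M \mid \triangleright\{\mathtt{l}_i(x_i).M_i\}_{i\in I} \mid \blacktriangle\mathtt{l}(a).M \mid \blacktriangledown\{\mathtt{l}_i(x_i).M_i\}_{i\in I} \mid \mu_X.M \mid X \mid \mathsf{if}\ A\ \mathsf{then}\ M\ \mathsf{else}\ N \mid \mathbf{0} \mid \mathsf{no}_P \mid \mathsf{no}_E$ ($\triangleleft,\triangleright$: send to / receive from the monitored process; $\blacktriangle,\blacktriangledown$: send to / receive from the environment). Monitor transitions: $\triangleleft\mathtt{l}(v).M\xrightarrow{\triangleleft\mathtt{l}(v)}M$; $\blacktriangle\mathtt{l}(v).M\xrightarrow{\blacktriangle\mathtt{l}(v)}M$; $\mu_X.M\xrightarrow{\tau}M[\mu_X.M/X]$; $\triangleright\{\mathtt{l}_i(x_i).M_i\}_{i\in I}\xrightarrow{\triangleright\mathtt{l}_j(v)}M_j[v/x_j]$ and $\blacktriangledown\{\mathtt{l}_i(x_i).M_i\}_{i\in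 I}\xrightarrow{\blacktriangledown\mathtt{l}_j(v)}M_j[v/x_j]$ for $j\in I$; conditionals as for processes; violations: $\triangleright\{\mathtt{l}_i(x_i).M_i\}_{i\in I}\xrightarrow{\triangleright\mathtt{l}(v)}\mathsf{no}_P$ and $\blacktriangledown\{\mathtt{l}_i(x_i).M_i\}_{i\in I}\xrightarrow{\blacktriangledown\mathtt{l}(v)}\mathsf{no}_E$ whenever $\mathtt{l}\neq\mathtt{l}_i$ for all $i\in I$. Composite system $\langle P;M\rangle$: if $P\xrightarrow{\triangleleft\mathtt{l}(v)}P'$ and $M\xrightarrow{\triangleright\mathtt{l}(v)}M'$ then $\langle P;M\rangle\xrightarrow{\tau}\langle P';M'\rangle$; if $P\xrightarrow{\triangleright\mathtt{l}(v)}P'$ and $M\xrightarrow{\triangleleft\mathtt{l}(v)}M'$ then $\langle P;M\rangle\xrightarrow{\tau}\langle P';M'\rangle$; if $M\xrightarrow{\alpha}M'$ with $\alpha\in\{\blacktriangle\mathtt{l}(v),\blacktriangledown\mathtt{l}(v)\}$ then $\langle P;M\rangle\xrightarrow{\alpha}\langle P;M'\rangle$; if $P\xrightarrow{\tau}P'$ then $\langle P;M\rangle\xrightarrow{\tau}\langle P';M\rangle$; if $M\xrightarrow{\tau}M'$ then $\langle P;M\rangle\xrightarrow{\tau}\langle P;M'\rangle$. A trace $t$ is a finite sequence of actions $\blacktriangle\mathtt{l}(v)$, $\blacktriangledown\mathtt{l}(v)$; $\xRightarrow{t}$ is a sequence of transitions whose visible labels are $t$, interleaved with finitely many $\tau$-transitions.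 Monitor synthesis $[\![-]\!]$: $[\![\oplus\{!\mathtt{l}_i(\mathsf{B}_i).S_i\}_{i\in I}]\!] = \triangleright\{\mathtt{l}_i(x_i).\,\mathsf{if}\ \mathsf{isValue}_{\mathsf{B}_i}(x_i)\ \mathsf{then}\ \blacktriangle\mathtt{l}_i(x_i).[\![S_i]\!]\ \mathsf{else}\ \mathsf{no}_P\}_{i\in I}$; $[\![\&\{?\mathtt{l}_i(\mathsf{B}_i).S_i\}_{i\in I}]\!] = \blacktriangledown\{\mathtt{l}_i(x_i).\,\mathsf{if}\ \mathsf{isValue}_{\mathsf{B}_i}(x_i)\ \mathsf{then}\ \triangleleft\mathtt{l}_i(x_i).[\![S_i]\!]\ \mathsf{else}\ \mathsf{no}_E\}_{i\in I}$; $[\![\mathsf{rec}\ X.S]\!]=\mu_X.[\![S]\!]$; $[\![X]\!]=X$; $[\![\mathsf{end}]\!]=\mathbf{0}$. *)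

theory Defs
  imports Main
begin

type_synonym label = string
type_synonym vvar = string
type_synonym pvar = string

datatype val = VInt int | VStr string | VBool bool | VPair val val

datatype btype = TInt | TStr | TBool | TPair btype btype

fun has_type :: "val \<Rightarrow> btype \<Rightarrow> bool" where
  "has_type (VInt _) TInt = True"
| "has_type (VStr _) TStr = True"
| "has_type (VBool _) TBool = True"
| "has_type (VPair v w) (TPair B C) = (has_type v B \<and> has_type w C)"
| "has_type _ _ = False"

datatype arg = AVal val | AVar vvar

datatype pred = PTT | PFF | PEq arg arg | PLess arg arg | PAnd pred pred | PNot pred
  | PIsVal btype arg

fun eval_arg :: "arg \<Rightarrow> val option" where
  "eval_arg (AVal v) = Some v"
| "eval_arg (AVar _) = None"

fun eval :: "pred \<Rightarrow> bool option" where
  "eval PTT = Some True"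
| "eval PFF = Some False"
| "eval (PEq a b) = (case (eval_arg a, eval_arg b) of
      (Some v, Some w) \<Rightarrow> Some (v = w) | _ \<Rightarrow> None)"
| "eval (PLess a b) = (case (eval_arg a, eval_arg b) of
      (Some (VInt i), Some (VInt j)) \<Rightarrow> Some (i < j) | _ \<Rightarrow> None)"
| "eval (PAnd A B) = (case (eval A, eval B) of
      (Some p, Some q) \<Rightarrow> Some (p \<and> q) | _ \<Rightarrow> None)"
| "eval (PNot A) = map_option Not (eval A)"
| "eval (PIsVal B a) = map_option (\<lambda>v. has_type v B) (eval_arg a)"

fun subst_arg :: "arg \<Rightarrow> vvar \<Rightarrow> val \<Rightarrow> arg" where
  "subst_arg (AVar y) x v = (if y = x then AVal v else AVar y)"
| "subst_arg (AVal w) x v = AVal w"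

fun subst_pred :: "pred \<Rightarrow> vvar \<Rightarrow> val \<Rightarrow> pred" where
  "subst_pred PTT x v = PTT"
| "subst_pred PFF x v = PFF"
| "subst_pred (PEq a b) x v = PEq (subst_arg a x v) (subst_arg b x v)"
| "subst_pred (PLess a b) x v = PLess (subst_arg a x v) (subst_arg b x v)"
| "subst_pred (PAnd A B) x v = PAnd (subst_pred A x v) (subst_pred B x v)"
| "subst_pred (PNot A) x v = PNot (subst_pred A x v)"
| "subst_pred (PIsVal B a) x v = PIsVal B (subst_arg a x v)"

text \<open>A branching \<open>\<triangleright>{l_i(x_i).P_i}_{i\<in>I}\<close> is a list of triples (l_i, x_i, P_i),
  read as the finite partial map map_of (first occurrence of a label wins).\<close>
datatype proc =
    PSend label arg proc
  | PBra "(label \<times> vvar \<times> proc) list"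
  | PRec pvar proc
  | PVar pvar
  | PIf pred proc proc
  | PNil

fun psubstv :: "proc \<Rightarrow> vvar \<Rightarrow> val \<Rightarrow> proc" where
  "psubstv (PSend l a P) x v = PSend l (subst_arg a x v) (psubstv P x v)"
| "psubstv (PBra bs) x v =
     PBra (map (\<lambda>(l, y, Q). (l, y, if y = x then Q else psubstv Q x v)) bs)"
| "psubstv (PRec X P) x v = PRec X (psubstv P x v)"
| "psubstv (PVar X) x v = PVar X"
| "psubstv (PIf A P Q) x v = PIf (subst_pred A x v) (psubstv P x v) (psubstv Q x v)"
| "psubstv PNil x v = PNil"

fun psubstX :: "proc \<Rightarrow> pvar \<Rightarrow> proc \<Rightarrow> proc" where
  "psubstX (PSend l a P) X R = PSend l a (psubstX P X R)"
| "psubstX (PBra bs) X R = PBra (map (\<lambda>(l, y, Q). (l, y, psubstX Q X R)) bs)"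
| "psubstX (PRec Y P) X R = (if Y = X then PRec Y P else PRec Y (psubstX P X R))"
| "psubstX (PVar Y) X R = (if Y = X then R else PVar Y)"
| "psubstX (PIf A P Q) X R = PIf A (psubstX P X R) (psubstX Q X R)"
| "psubstX PNil X R = PNil"

datatype act =
    ASndP label val
  | ARcvP label val
  | ASndE label val
  | ARcvE label val
  | ATau

inductive pstep :: "proc \<Rightarrow> act \<Rightarrow> proc \<Rightarrow> bool" where
  p_rec: "pstep (PRec X P) ATau (psubstX P X (PRec X P))"
| p_send: "pstep (PSend l (AVal v) P) (ASndP l v) P"
| p_bra: "map_of bs l = Some (x, P) \<Longrightarrow> pstep (PBra bs) (ARcvP l v) (psubstv P x v)"
| p_ift: "eval A = Some True \<Longrightarrow> pstep (PIf A P Q) ATau P"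
| p_iff: "eval A = Some False \<Longrightarrow> pstep (PIf A P Q) ATau Q"

datatype stype =
    SSel "(label \<times> btype \<times> stype) list"
  | SBra "(label \<times> btype \<times> stype) list"
  | SRec pvar stype
  | STVar pvar
  | SEnd

fun ssubst :: "stype \<Rightarrow> pvar \<Rightarrow> stype \<Rightarrow> stype" where
  "ssubst (SSel bs) X R = SSel (map (\<lambda>(l, B, S). (l, B, ssubst S X R)) bs)"
| "ssubst (SBra bs) X R = SBra (map (\<lambda>(l, B, S). (l, B, ssubst S X R)) bs)"
| "ssubst (SRec Y S) X R = (if Y = X then SRec Y S else SRec Y (ssubst S X R))"
| "ssubst (STVar Y) X R = (if Y = X then R else STVar Y)"
| "ssubst SEnd X R = SEnd"

primrec unguarded :: "stype \<Rightarrow> pvar set" where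
  "unguarded (SSel bs) = {}"
| "unguarded (SBra bs) = {}"
| "unguarded (SRec Y S) = unguarded S - {Y}"
| "unguarded (STVar Y) = {Y}"
| "unguarded SEnd = {}"

fun wf_stype :: "stype \<Rightarrow> bool" where
  "wf_stype (SSel bs) = (bs \<noteq> [] \<and> distinct (map fst bs) \<and> (\<forall>(l, B, S) \<in> set bs. wf_stype S))"
| "wf_stype (SBra bs) = (bs \<noteq> [] \<and> distinct (map fst bs) \<and> (\<forall>(l, B, S) \<in> set bs. wf_stype S))"
| "wf_stype (SRec X S) = (X \<notin> unguarded S \<and> wf_stype S)"
| "wf_stype (STVar X) = True"
| "wf_stype SEnd = True"

text \<open>Equi-recursive type equality: head unfolding of top-level recursions,
  and the coinductive equality of the resulting (infinite) unfoldings.\<close>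
inductive hnf :: "stype \<Rightarrow> stype \<Rightarrow> bool" where
  hnf_sel: "hnf (SSel bs) (SSel bs)"
| hnf_bra: "hnf (SBra bs) (SBra bs)"
| hnf_end: "hnf SEnd SEnd"
| hnf_rec: "hnf (ssubst S X (SRec X S)) T \<Longrightarrow> hnf (SRec X S) T"

coinductive teq :: "stype \<Rightarrow> stype \<Rightarrow> bool" where
  teq_end: "hnf S SEnd \<Longrightarrow> hnf T SEnd \<Longrightarrow> teq S T"
| teq_sel: "hnf S (SSel bs) \<Longrightarrow> hnf T (SSel cs) \<Longrightarrow>
    (\<forall>(l, B, S') \<in> set bs. \<exists>T'. (l, B, T') \<in> set cs \<and> teq S' T') \<Longrightarrow>
    (\<forall>(l, B, T') \<in> set cs. \<exists>S'. (l, B, S') \<in> set bs \<and> teq S' T') \<Longrightarrow> teq S T"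
| teq_bra: "hnf S (SBra bs) \<Longrightarrow> hnf T (SBra cs) \<Longrightarrow>
    (\<forall>(l, B, S') \<in> set bs. \<exists>T'. (l, B, T') \<in> set cs \<and> teq S' T') \<Longrightarrow>
    (\<forall>(l, B, T') \<in> set cs. \<exists>S'. (l, B, S') \<in> set bs \<and> teq S' T') \<Longrightarrow> teq S T"

fun arg_type :: "(vvar \<rightharpoonup> btype) \<Rightarrow> arg \<Rightarrow> btype \<Rightarrow> bool" where
  "arg_type \<Gamma> (AVal v) B = has_type v B"
| "arg_type \<Gamma> (AVar x) B = (\<Gamma> x = Some B)"

fun pred_ok :: "(vvar \<rightharpoonup> btype) \<Rightarrow> pred \<Rightarrow> bool" where
  "pred_ok \<Gamma> PTT = True"
| "pred_ok \<Gamma> PFF = True"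
| "pred_ok \<Gamma> (PEq a b) = (\<exists>B. arg_type \<Gamma> a B \<and> arg_type \<Gamma> b B)"
| "pred_ok \<Gamma> (PLess a b) = (arg_type \<Gamma> a TInt \<and> arg_type \<Gamma> b TInt)"
| "pred_ok \<Gamma> (PAnd A B) = (pred_ok \<Gamma> A \<and> pred_ok \<Gamma> B)"
| "pred_ok \<Gamma> (PNot A) = pred_ok \<Gamma> A"
| "pred_ok \<Gamma> (PIsVal B a) = (\<exists>C. arg_type \<Gamma> a C)"

inductive typed :: "(pvar \<rightharpoonup> stype) \<Rightarrow> (vvar \<rightharpoonup> btype) \<Rightarrow> proc \<Rightarrow> stype \<Rightarrow> bool" where
  tBra: "(\<forall>(l, B, S) \<in> set tbs. \<exists>x Q. map_of bs l = Some (x, Q) \<and> typed \<Theta> (\<Gamma>(x \<mapsto> B)) Q S)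
         \<Longrightarrow> typed \<Theta> \<Gamma> (PBra bs) (SBra tbs)"
| tSel: "(l, B, S) \<in> set tbs \<Longrightarrow> arg_type \<Gamma> a B \<Longrightarrow> typed \<Theta> \<Gamma> P S
         \<Longrightarrow> typed \<Theta> \<Gamma> (PSend l a P) (SSel tbs)"
| tRec: "typed (\<Theta>(X \<mapsto> S)) \<Gamma> P S \<Longrightarrow> typed \<Theta> \<Gamma> (PRec X P) S"
| tPVar: "\<Theta> X = Some S \<Longrightarrow> typed \<Theta> \<Gamma> (PVar X) S"
| tIf: "pred_ok \<Gamma> A \<Longrightarrow> typed \<Theta> \<Gamma> P S \<Longrightarrow> typed \<Theta> \<Gamma> Q S \<Longrightarrow> typed \<Theta> \<Gamma> (PIf A P Q) S"
| tNil: "typed \<Theta> \<Gamma> PNil SEnd"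
| tEq: "typed \<Theta> \<Gamma> P S \<Longrightarrow> teq S S' \<Longrightarrow> typed \<Theta> \<Gamma> P S'"

datatype mon =
    MSendP label arg mon
  | MBraP "(label \<times> vvar \<times> mon) list"
  | MSendE label arg mon
  | MBraE "(label \<times> vvar \<times> mon) list"
  | MRec pvar mon
  | MVar pvar
  | MIf pred mon mon
  | MNil
  | NoP
  | NoE

fun msubstv :: "mon \<Rightarrow> vvar \<Rightarrow> val \<Rightarrow> mon" where
  "msubstv (MSendP l a M) x v = MSendP l (subst_arg a x v) (msubstv M x v)"
| "msubstv (MBraP bs) x v =
     MBraP (map (\<lambda>(l, y, N). (l, y, if y = x then N else msubstv N x v)) bs)"
| "msubstv (MSendE l a M) x v = MSendE l (subst_arg a x v) (msubstv M x v)"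
| "msubstv (MBraE bs) x v =
     MBraE (map (\<lambda>(l, y, N). (l, y, if y = x then N else msubstv N x v)) bs)"
| "msubstv (MRec X M) x v = MRec X (msubstv M x v)"
| "msubstv (MVar X) x v = MVar X"
| "msubstv (MIf A M N) x v = MIf (subst_pred A x v) (msubstv M x v) (msubstv N x v)"
| "msubstv MNil x v = MNil"
| "msubstv NoP x v = NoP"
| "msubstv NoE x v = NoE"

fun msubstX :: "mon \<Rightarrow> pvar \<Rightarrow> mon \<Rightarrow> mon" where
  "msubstX (MSendP l a M) X R = MSendP l a (msubstX M X R)"
| "msubstX (MBraP bs) X R = MBraP (map (\<lambda>(l, y, N). (l, y, msubstX N X R)) bs)"
| "msubstX (MSendE l a M) X R = MSendE l a (msubstX M X R)"
| "msubstX (MBraE bs) X R = MBraE (map (\<lambda>(l, y, N). (l, y, msubstX N X R)) bs)"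
| "msubstX (MRec Y M) X R = (if Y = X then MRec Y M else MRec Y (msubstX M X R))"
| "msubstX (MVar Y) X R = (if Y = X then R else MVar Y)"
| "msubstX (MIf A M N) X R = MIf A (msubstX M X R) (msubstX N X R)"
| "msubstX MNil X R = MNil"
| "msubstX NoP X R = NoP"
| "msubstX NoE X R = NoE"

inductive mstep :: "mon \<Rightarrow> act \<Rightarrow> mon \<Rightarrow> bool" where
  m_sendP: "mstep (MSendP l (AVal v) M) (ASndP l v) M"
| m_sendE: "mstep (MSendE l (AVal v) M) (ASndE l v) M"
| m_rec: "mstep (MRec X M) ATau (msubstX M X (MRec X M))"
| m_braP: "map_of bs l = Some (x, M) \<Longrightarrow> mstep (MBraP bs) (ARcvP l v) (msubstv M x v)"
| m_braE: "map_of bs l = Some (x, M) \<Longrightarrow> mstep (MBraE bs) (ARcvE l v) (msubstv M x v)"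
| m_ift: "eval A = Some True \<Longrightarrow> mstep (MIf A M N) ATau M"
| m_iff: "eval A = Some False \<Longrightarrow> mstep (MIf A M N) ATau N"
| m_noP: "map_of bs l = None \<Longrightarrow> mstep (MBraP bs) (ARcvP l v) NoP"
| m_noE: "map_of bs l = None \<Longrightarrow> mstep (MBraE bs) (ARcvE l v) NoE"

inductive sstep :: "proc \<Rightarrow> mon \<Rightarrow> act \<Rightarrow> proc \<Rightarrow> mon \<Rightarrow> bool" where
  s_out: "pstep P (ASndP l v) P' \<Longrightarrow> mstep M (ARcvP l v) M' \<Longrightarrow> sstep P M ATau P' M'"
| s_in: "pstep P (ARcvP l v) P' \<Longrightarrow> mstep M (ASndP l v) M' \<Longrightarrow> sstep P M ATau P' M'"
| s_envS: "mstep M (ASndE l v) M' \<Longrightarrow> sstep P M (ASndE l v) P M'"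
| s_envR: "mstep M (ARcvE l v) M' \<Longrightarrow> sstep P M (ARcvE l v) P M'"
| s_tauP: "pstep P ATau P' \<Longrightarrow> sstep P M ATau P' M"
| s_tauM: "mstep M ATau M' \<Longrightarrow> sstep P M ATau P M'"

inductive wsteps :: "proc \<Rightarrow> mon \<Rightarrow> act list \<Rightarrow> proc \<Rightarrow> mon \<Rightarrow> bool" where
  w_refl: "wsteps P M [] P M"
| w_tau: "sstep P M ATau P1 M1 \<Longrightarrow> wsteps P1 M1 t P' M' \<Longrightarrow> wsteps P M t P' M'"
| w_vis: "sstep P M \<alpha> P1 M1 \<Longrightarrow> \<alpha> \<noteq> ATau \<Longrightarrow> wsteps P1 M1 t P' M' \<Longrightarrow> wsteps P M (\<alpha> # t) P' M'"

fun synth :: "stype \<Rightarrow> mon" where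
  "synth (SSel bs) = MBraP (map (\<lambda>(l, B, S). (l, ''x'',
      MIf (PIsVal B (AVar ''x'')) (MSendE l (AVar ''x'') (synth S)) NoP)) bs)"
| "synth (SBra bs) = MBraE (map (\<lambda>(l, B, S). (l, ''x'',
      MIf (PIsVal B (AVar ''x'')) (MSendP l (AVar ''x'') (synth S)) NoE)) bs)"
| "synth (SRec X S) = MRec X (synth S)"
| "synth (STVar X) = MVar X"
| "synth SEnd = MNil"

end

theory Submission
  imports Defs
begin

text \<open>
  Reachable configurations of a well-typed process \<open>P\<close> running under \<open>[[S]]\<close> satisfy an
  invariant: the monitor is the synthesis of (an unfolding of) a type of the current process,
  or one of the intermediate states of the synthesised monitor while it checks and forwards a
  single message, or \<open>no_E\<close>.  The invariant is preserved since typing is preserved by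
  \<open>\<tau>\<close>-steps and since, by inversion of typing, a well-typed process only sends labels and
  values offered by its selection type.  As \<open>no_P\<close> is not among these monitors, it is never reached.
\<close>

lemma map_of_map_with_key:
  "map_of (map (\<lambda>(k, a, b). (k, f k a b)) xs) k = map_option (\<lambda>(a, b). f k a b) (map_of xs k)"
  by (induction xs) auto

text \<open>The part of well-formedness that survives substitution.  Distinctness is what makes
  the branch selected by \<^const>\<open>map_of\<close> the one a typing derivation refers to.\<close>
fun distinct_labels :: "stype \<Rightarrow> bool" where
  "distinct_labels (SSel bs) = (distinct (map fst bs) \<and> (\<forall>(l, B, S) \<in> set bs. distinct_labels S))"
| "distinct_labels (SBra bs) = (distinct (map fst bs) \<and> (\<forall>(l, B, S) \<in> set bs. distinct_labels S))"
| "distinct_labels (SRec X S) = distinct_labels S"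
| "distinct_labels (STVar X) = True"
| "distinct_labels SEnd = True"

lemma distinct_labels_ssubst:
  "distinct_labels S \<Longrightarrow> distinct_labels R \<Longrightarrow> distinct_labels (ssubst S X R)"
  by (induction S X R rule: ssubst.induct) (auto simp: comp_def case_prod_beta)

lemma wf_stype_distinct_labels: "wf_stype S \<Longrightarrow> distinct_labels S"
  by (induction S rule: wf_stype.induct) auto

definition unfold1 :: "stype \<Rightarrow> stype \<Rightarrow> bool" where
  "unfold1 T S \<longleftrightarrow> (\<exists>X T'. T = SRec X T' \<and> S = ssubst T' X (SRec X T'))"

lemma distinct_labels_unfold1: "distinct_labels T \<Longrightarrow> unfold1 T S \<Longrightarrow> distinct_labels S"
  by (auto simp: unfold1_def intro: distinct_labels_ssubst)

inductive_cases hnf_SSelE: "hnf (SSel bs) T"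
inductive_cases hnf_SBraE: "hnf (SBra bs) T"
inductive_cases hnf_SEndE: "hnf SEnd T"
inductive_cases hnf_SRecE: "hnf (SRec X S) T"

lemma hnf_unique: "hnf S H \<Longrightarrow> hnf S H' \<Longrightarrow> H = H'"
proof (induction arbitrary: H' rule: hnf.induct)
  case (hnf_rec S X T)
  from hnf_rec.prems show ?case by (rule hnf_SRecE) (rule hnf_rec.IH)
qed (auto elim: hnf_SSelE hnf_SBraE hnf_SEndE)

lemma hnf_unfold1_rtranclp: "unfold1\<^sup>*\<^sup>* T S \<Longrightarrow> hnf T H \<Longrightarrow> hnf S H"
  by (induction rule: rtranclp_induct) (auto simp: unfold1_def elim: hnf_SRecE)

lemma hnf_SSel_unfold1_rtranclp:
  "unfold1\<^sup>*\<^sup>* T (SSel bs) \<Longrightarrow> hnf T (SSel cs) \<Longrightarrow> cs = bs"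
  by (auto dest: hnf_unfold1_rtranclp elim: hnf_SSelE)

lemma hnf_SBra_unfold1_rtranclp:
  "unfold1\<^sup>*\<^sup>* T (SBra bs) \<Longrightarrow> hnf T (SBra cs) \<Longrightarrow> cs = bs"
  by (auto dest: hnf_unfold1_rtranclp elim: hnf_SBraE)

lemma arg_type_map_le: "arg_type \<Gamma> a B \<Longrightarrow> \<Gamma> \<subseteq>\<^sub>m \<Gamma>' \<Longrightarrow> arg_type \<Gamma>' a B"
  by (cases a) (auto simp: map_le_def dom_def)

lemma pred_ok_map_le: "pred_ok \<Gamma> A \<Longrightarrow> \<Gamma> \<subseteq>\<^sub>m \<Gamma>' \<Longrightarrow> pred_ok \<Gamma>' A"
  by (induction A) (auto intro: arg_type_map_le)

lemma typed_map_le: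
  "typed \<Theta> \<Gamma> P T \<Longrightarrow> \<Theta> \<subseteq>\<^sub>m \<Theta>' \<Longrightarrow> \<Gamma> \<subseteq>\<^sub>m \<Gamma>' \<Longrightarrow> typed \<Theta>' \<Gamma>' P T"
proof (induction arbitrary: \<Theta>' \<Gamma>' rule: typed.induct)
  case (tBra tbs bs \<Theta> \<Gamma>)
  show ?case
  proof (rule typed.tBra, clarify)
    fix l B S assume "(l, B, S) \<in> set tbs"
    with tBra.IH obtain x Q where "map_of bs l = Some (x, Q)"
      and "\<And>\<Theta>' \<Gamma>'. \<Theta> \<subseteq>\<^sub>m \<Theta>' \<Longrightarrow> \<Gamma>(x \<mapsto> B) \<subseteq>\<^sub>m \<Gamma>' \<Longrightarrow> typed \<Theta>' \<Gamma>' Q S"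
      by fastforce
    moreover have "\<Gamma>(x \<mapsto> B) \<subseteq>\<^sub>m \<Gamma>'(x \<mapsto> B)"
      using tBra.prems(2) by (auto simp: map_le_def)
    ultimately show "\<exists>x Q. map_of bs l = Some (x, Q) \<and> typed \<Theta>' (\<Gamma>'(x \<mapsto> B)) Q S"
      using tBra.prems(1) by blast
  qed
next
  case (tRec \<Theta> X S \<Gamma> P)
  have "\<Theta>(X \<mapsto> S) \<subseteq>\<^sub>m \<Theta>'(X \<mapsto> S)"
    using tRec.prems(1) by (auto simp: map_le_def)
  with tRec.IH tRec.prems(2) show ?case by (blast intro: typed.tRec)
next
  case (tPVar \<Theta> X S \<Gamma>)
  then have "\<Theta>' X = Some S" by (auto simp: map_le_def dom_def)
  then show ?case by (rule typed.tPVar)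
qed (auto intro: typed.intros arg_type_map_le pred_ok_map_le)

lemma typed_psubstX:
  assumes "typed \<Theta> \<Gamma> P T" and "\<Theta> X = Some S" and "typed Map.empty Map.empty R S"
    and "\<forall>Y. Y \<noteq> X \<longrightarrow> \<Theta>' Y = \<Theta> Y"
  shows "typed \<Theta>' \<Gamma> (psubstX P X R) T"
  using assms
proof (induction arbitrary: \<Theta>' rule: typed.induct)
  case (tBra tbs bs \<Theta> \<Gamma>)
  show ?case unfolding psubstX.simps
  proof (rule typed.tBra, clarify)
    fix l B S' assume "(l, B, S') \<in> set tbs"
    with tBra.IH tBra.prems obtain x Q where "map_of bs l = Some (x, Q)"
      and "typed \<Theta>' (\<Gamma>(x \<mapsto> B)) (psubstX Q X R) S'"
      by fastforce
    then show "\<exists>x Q. map_of (map (\<lambda>(l, y, Q). (l, y, psubstX Q X R)) bs) l = Some (x, Q)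
        \<and> typed \<Theta>' (\<Gamma>(x \<mapsto> B)) Q S'"
      by (simp add: map_of_map_with_key)
  qed
next
  case (tRec \<Theta> Y T \<Gamma> P)
  show ?case
  proof (cases "Y = X")
    case True
    then have "\<Theta>'(Y \<mapsto> T) = \<Theta>(Y \<mapsto> T)"
      using tRec.prems(3) by (auto simp: fun_eq_iff)
    with True tRec.hyps show ?thesis by (auto intro: typed.tRec)
  next
    case False
    have "typed (\<Theta>'(Y \<mapsto> T)) \<Gamma> (psubstX P X R) T"
      by (rule tRec.IH) (use tRec.prems False in auto)
    with False show ?thesis by (auto intro: typed.tRec)
  qed
next
  case (tPVar \<Theta> Y T \<Gamma>)
  have "typed \<Theta>' \<Gamma> R S"
    using tPVar.prems(2) by (rule typed_map_le) simp_all
  with tPVar show ?case by (auto intro: typed.tPVar)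
qed (auto intro: typed.intros)

lemma arg_type_subst_arg:
  "arg_type \<Gamma> a C \<Longrightarrow> \<Gamma> x = Some B \<Longrightarrow> has_type v B \<Longrightarrow> \<forall>y. y \<noteq> x \<longrightarrow> \<Gamma>' y = \<Gamma> y
   \<Longrightarrow> arg_type \<Gamma>' (subst_arg a x v) C"
  by (cases a) auto

lemma pred_ok_subst_pred:
  "pred_ok \<Gamma> A \<Longrightarrow> \<Gamma> x = Some B \<Longrightarrow> has_type v B \<Longrightarrow> \<forall>y. y \<noteq> x \<longrightarrow> \<Gamma>' y = \<Gamma> y
   \<Longrightarrow> pred_ok \<Gamma>' (subst_pred A x v)"
  by (induction A) (auto dest: arg_type_subst_arg)

lemma typed_psubstv:
  assumes "typed \<Theta> \<Gamma> P T" and "\<Gamma> x = Some B" and "has_type v B"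
    and "\<forall>y. y \<noteq> x \<longrightarrow> \<Gamma>' y = \<Gamma> y"
  shows "typed \<Theta> \<Gamma>' (psubstv P x v) T"
  using assms
proof (induction arbitrary: \<Gamma>' rule: typed.induct)
  case (tBra tbs bs \<Theta> \<Gamma>)
  show ?case unfolding psubstv.simps
  proof (rule typed.tBra, clarify)
    fix l B' S' assume "(l, B', S') \<in> set tbs"
    with tBra.IH tBra.prems obtain y Q where m: "map_of bs l = Some (y, Q)"
      and t: "typed \<Theta> (\<Gamma>(y \<mapsto> B')) Q S'"
      and ih: "\<And>\<Gamma>''. (\<Gamma>(y \<mapsto> B')) x = Some B \<Longrightarrow> \<forall>z. z \<noteq> x \<longrightarrow> \<Gamma>'' z = (\<Gamma>(y \<mapsto> B')) z
          \<Longrightarrow> typed \<Theta> \<Gamma>'' (psubstv Q x v) S'"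
      by fastforce
    have "typed \<Theta> (\<Gamma>'(y \<mapsto> B')) (if y = x then Q else psubstv Q x v) S'"
    proof (cases "y = x")
      case True
      then have "\<Gamma>'(y \<mapsto> B') = \<Gamma>(y \<mapsto> B')"
        using tBra.prems(3) by (auto simp: fun_eq_iff)
      with True t show ?thesis by simp
    next
      case False
      with tBra.prems show ?thesis by (simp, intro ih) auto
    qed
    with m show "\<exists>y Q. map_of (map (\<lambda>(l, y, Q). (l, y, if y = x then Q else psubstv Q x v)) bs) l
        = Some (y, Q) \<and> typed \<Theta> (\<Gamma>'(y \<mapsto> B')) Q S'"
      by (simp add: map_of_map_with_key)
  qed
qed (auto intro: typed.intros arg_type_subst_arg pred_ok_subst_pred)

lemma typed_PSendD:
  "typed \<Theta> \<Gamma> (PSend l a P) T \<Longrightarrow>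
   \<exists>cs B S. hnf T (SSel cs) \<and> (l, B, S) \<in> set cs \<and> arg_type \<Gamma> a B \<and> typed \<Theta> \<Gamma> P S"
proof (induction \<Theta> \<Gamma> "PSend l a P" T rule: typed.induct)
  case (tSel B S tbs \<Gamma> \<Theta>)
  then show ?case by (auto intro: hnf.intros)
next
  case (tEq \<Theta> \<Gamma> T T')
  then obtain cs B S where h: "hnf T (SSel cs)" and m: "(l, B, S) \<in> set cs"
    and a: "arg_type \<Gamma> a B" and t: "typed \<Theta> \<Gamma> P S"
    by blast
  from \<open>teq T T'\<close> show ?case
  proof cases
    case (teq_sel bs cs')
    with h have "bs = cs" by (blast dest: hnf_unique)
    with teq_sel m obtain S' where "(l, B, S') \<in> set cs'" and "teq S S'" by fastforce
    with teq_sel a t show ?thesis by (blast intro: typed.tEq)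
  qed (use h hnf_unique in fastforce)+
qed

lemma typed_PBraD:
  "typed \<Theta> \<Gamma> (PBra bs) T \<Longrightarrow>
   \<exists>cs. hnf T (SBra cs)
     \<and> (\<forall>(l, B, S) \<in> set cs. \<exists>x Q. map_of bs l = Some (x, Q) \<and> typed \<Theta> (\<Gamma>(x \<mapsto> B)) Q S)"
proof (induction \<Theta> \<Gamma> "PBra bs" T rule: typed.induct)
  case (tBra tbs \<Theta> \<Gamma>)
  then show ?case by (blast intro: hnf.intros)
next
  case (tEq \<Theta> \<Gamma> T T')
  then obtain cs where h: "hnf T (SBra cs)"
    and m: "\<forall>(l, B, S) \<in> set cs. \<exists>x Q. map_of bs l = Some (x, Q) \<and> typed \<Theta> (\<Gamma>(x \<mapsto> B)) Q S"
    by blast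
  from \<open>teq T T'\<close> show ?case
  proof cases
    case (teq_bra bs' cs')
    with h have "bs' = cs" by (blast dest: hnf_unique)
    have "\<exists>x Q. map_of bs l = Some (x, Q) \<and> typed \<Theta> (\<Gamma>(x \<mapsto> B)) Q S'"
      if "(l, B, S') \<in> set cs'" for l B S'
    proof -
      from that teq_bra(4) \<open>bs' = cs\<close> obtain S where "(l, B, S) \<in> set cs" and "teq S S'"
        by fastforce
      with m show ?thesis by (blast intro: typed.tEq)
    qed
    with teq_bra show ?thesis by blast
  qed (use h hnf_unique in fastforce)+
qed

lemma typed_tau_step:
  "typed Map.empty Map.empty P T \<Longrightarrow> pstep P ATau P' \<Longrightarrow> typed Map.empty Map.empty P' T"
proof (induction "Map.empty :: pvar \<rightharpoonup> stype" "Map.empty :: vvar \<rightharpoonup> btype" P T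
    rule: typed.induct)
  case (tRec X S P)
  then have "P' = psubstX P X (PRec X P)" by (auto elim: pstep.cases)
  moreover have "typed Map.empty Map.empty (PRec X P) S"
    using tRec.hyps(1) by (rule typed.tRec)
  ultimately show ?case
    using typed_psubstX[OF tRec.hyps(1), of X] by auto
next
  case (tIf A P S Q)
  then show ?case by (auto elim: pstep.cases)
qed (auto intro: typed.tEq elim: pstep.cases)

lemma msubstX_synth: "msubstX (synth S) X (synth R) = synth (ssubst S X R)"
  by (induction S rule: synth.induct) auto

lemma msubstv_synth: "msubstv (synth S) ''x'' v = synth S"
  by (induction S rule: synth.induct) auto

lemma synth_neq_NoP: "synth S \<noteq> NoP"
  by (cases S) auto

lemma mstep_synth_ATau: "mstep (synth S) ATau M \<Longrightarrow> \<exists>S'. unfold1 S S' \<and> M = synth S'"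
  by (cases S) (auto simp: unfold1_def msubstX_synth[symmetric] elim: mstep.cases)

lemma mstep_synth_ARcvP:
  "mstep (synth S) (ARcvP l v) M \<Longrightarrow> \<exists>bs. S = SSel bs \<and> M = (case map_of bs l of
      None \<Rightarrow> NoP
    | Some (B, S') \<Rightarrow> MIf (PIsVal B (AVal v)) (MSendE l (AVal v) (synth S')) NoP)"
  by (cases S) (auto simp: map_of_map_with_key msubstv_synth elim!: mstep.cases)

lemma mstep_synth_ARcvE:
  "mstep (synth S) (ARcvE l v) M \<Longrightarrow> \<exists>bs. S = SBra bs \<and> M = (case map_of bs l of
      None \<Rightarrow> NoE
    | Some (B, S') \<Rightarrow> MIf (PIsVal B (AVal v)) (MSendP l (AVal v) (synth S')) NoE)"
  by (cases S) (auto simp: map_of_map_with_key msubstv_synth elim!: mstep.cases)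

lemma not_mstep_synth_ASndP: "\<not> mstep (synth S) (ASndP l v) M"
  by (cases S) (auto elim: mstep.cases)

lemma not_mstep_synth_ASndE: "\<not> mstep (synth S) (ASndE l v) M"
  by (cases S) (auto elim: mstep.cases)

text \<open>While the monitor unfolds recursion the
  process keeps its type \<open>T\<close>, hence \<^const>\<open>unfold1\<close>; when the monitor forwards an input, the
  branching type \<open>bs\<close> is kept to match the process's branch against it.\<close>
inductive monitor_inv :: "proc \<Rightarrow> mon \<Rightarrow> bool" where
  synth: "typed Map.empty Map.empty P T \<Longrightarrow> unfold1\<^sup>*\<^sup>* T S \<Longrightarrow> distinct_labels S
    \<Longrightarrow> monitor_inv P (synth S)"
| check_out: "has_type v B \<Longrightarrow> typed Map.empty Map.empty P S \<Longrightarrow> distinct_labels S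
    \<Longrightarrow> monitor_inv P (MIf (PIsVal B (AVal v)) (MSendE l (AVal v) (synth S)) NoP)"
| forward_out: "typed Map.empty Map.empty P S \<Longrightarrow> distinct_labels S
    \<Longrightarrow> monitor_inv P (MSendE l (AVal v) (synth S))"
| check_in: "typed Map.empty Map.empty P T \<Longrightarrow> unfold1\<^sup>*\<^sup>* T (SBra bs) \<Longrightarrow> (l, B, S) \<in> set bs
    \<Longrightarrow> distinct_labels S
    \<Longrightarrow> monitor_inv P (MIf (PIsVal B (AVal v)) (MSendP l (AVal v) (synth S)) NoE)"
| forward_in: "has_type v B \<Longrightarrow> typed Map.empty Map.empty P T \<Longrightarrow> unfold1\<^sup>*\<^sup>* T (SBra bs)
    \<Longrightarrow> (l, B, S) \<in> set bs \<Longrightarrow> distinct_labels S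
    \<Longrightarrow> monitor_inv P (MSendP l (AVal v) (synth S))"
| NoE: "monitor_inv P NoE"

lemma monitor_inv_tau_process:
  "monitor_inv P M \<Longrightarrow> pstep P ATau P' \<Longrightarrow> monitor_inv P' M"
  by (induction rule: monitor_inv.induct) (auto intro: monitor_inv.intros dest: typed_tau_step)

lemma monitor_inv_step_synth:
  assumes step: "sstep P (synth S) \<alpha> P' M'" and P: "typed Map.empty Map.empty P T"
    and T: "unfold1\<^sup>*\<^sup>* T S" and S: "distinct_labels S"
  shows "monitor_inv P' M'"
  using step
proof cases
  case (s_out l v)
  then have "P = PSend l (AVal v) P'" by (auto elim: pstep.cases)
  with P obtain cs B S' where T_sel: "hnf T (SSel cs)" and l: "(l, B, S') \<in> set cs"
    and v: "has_type v B" and P': "typed Map.empty Map.empty P' S'"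
    by (auto dest: typed_PSendD)
  from s_out obtain bs where bs: "S = SSel bs" and M': "M' = (case map_of bs l of
      None \<Rightarrow> NoP | Some (B, S') \<Rightarrow> MIf (PIsVal B (AVal v)) (MSendE l (AVal v) (synth S')) NoP)"
    by (blast dest: mstep_synth_ARcvP)
  from T T_sel bs have "cs = bs" by (blast dest: hnf_SSel_unfold1_rtranclp)
  with l bs S have "map_of bs l = Some (B, S')" and "distinct_labels S'"
    by (auto intro: map_of_is_SomeI)
  with M' v P' show ?thesis by (auto intro: monitor_inv.check_out)
next
  case (s_envR l v)
  then obtain bs where bs: "S = SBra bs" and M': "M' = (case map_of bs l of
      None \<Rightarrow> NoE | Some (B, S') \<Rightarrow> MIf (PIsVal B (AVal v)) (MSendP l (AVal v) (synth S')) NoE)"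
    by (blast dest: mstep_synth_ARcvE)
  show ?thesis
  proof (cases "map_of bs l")
    case (Some BS')
    with bs S M' P T s_envR show ?thesis
      by (cases BS') (auto intro: monitor_inv.check_in dest: map_of_SomeD)
  qed (use M' in \<open>simp add: monitor_inv.NoE\<close>)
next
  case s_tauP
  with P T S show ?thesis by (blast intro: monitor_inv.synth typed_tau_step)
next
  case s_tauM
  then obtain S' where "unfold1 S S'" and "M' = synth S'"
    by (blast dest: mstep_synth_ATau)
  moreover from T \<open>unfold1 S S'\<close> have "unfold1\<^sup>*\<^sup>* T S'" by simp
  moreover from S \<open>unfold1 S S'\<close> have "distinct_labels S'" by (rule distinct_labels_unfold1)
  ultimately show ?thesis
    using s_tauM P by (auto intro: monitor_inv.synth)
qed (auto simp: not_mstep_synth_ASndP not_mstep_synth_ASndE)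

lemma monitor_inv_input:
  assumes "pstep P (ARcvP l v) P'" and "has_type v B" and P: "typed Map.empty Map.empty P T"
    and T: "unfold1\<^sup>*\<^sup>* T (SBra bs)" and l: "(l, B, S) \<in> set bs" and S: "distinct_labels S"
  shows "monitor_inv P' (synth S)"
proof -
  from assms(1) obtain cs x Q where P_bra: "P = PBra cs" and "map_of cs l = Some (x, Q)"
    and P': "P' = psubstv Q x v"
    by (auto elim: pstep.cases)
  from P P_bra obtain bs' where T_bra: "hnf T (SBra bs')"
    and branches: "\<forall>(l, B, S) \<in> set bs'. \<exists>x Q. map_of cs l = Some (x, Q)
      \<and> typed Map.empty (Map.empty(x \<mapsto> B)) Q S"
    by (blast dest: typed_PBraD)
  from T T_bra have "bs' = bs" by (blast dest: hnf_SBra_unfold1_rtranclp)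
  with branches l \<open>map_of cs l = Some (x, Q)\<close>
  have "typed Map.empty (Map.empty(x \<mapsto> B)) Q S" by fastforce
  then have "typed Map.empty Map.empty (psubstv Q x v) S"
    by (rule typed_psubstv) (use \<open>has_type v B\<close> in auto)
  with P' S show ?thesis by (blast intro: monitor_inv.synth)
qed

lemma monitor_inv_step:
  assumes inv: "monitor_inv P M" and step: "sstep P M \<alpha> P' M'"
  shows "monitor_inv P' M'"
  using inv
proof cases
  case synth
  with step show ?thesis by (blast intro: monitor_inv_step_synth)
qed (use step inv in \<open>auto elim!: sstep.cases mstep.cases
  intro: monitor_inv.intros monitor_inv_input monitor_inv_tau_process\<close>)

lemma monitor_inv_wsteps: "wsteps P M t P' M' \<Longrightarrow> monitor_inv P M \<Longrightarrow> monitor_inv P' M'"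
  by (induction rule: wsteps.induct) (auto intro: monitor_inv_step)

lemma not_monitor_inv_NoP: "\<not> monitor_inv P NoP"
  by (auto elim: monitor_inv.cases simp: synth_neq_NoP[symmetric])

theorem mainTheorem1:
  fixes S :: stype and P :: proc
  assumes "wf_stype S"
    and "\<exists>t P'. wsteps P (synth S) t P' NoP"
  shows "\<not> typed Map.empty Map.empty P S"
proof
  assume "typed Map.empty Map.empty P S"
  with assms(1) have "monitor_inv P (synth S)"
    by (blast intro: monitor_inv.synth wf_stype_distinct_labels)
  with assms(2) obtain P' where "monitor_inv P' NoP"
    by (blast intro: monitor_inv_wsteps)
  with not_monitor_inv_NoP show False by blast
qed

end
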